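(* Let $q>1$ and let $\rho$ be a positive $2\pi$-periodic $C^2$ function with $(\ln\rho)''(t)<\sqrt{q}/(1+\sqrt{q})$ for all $t$. Let $\rho_n=\ln\rho$, $\theta_q=\arccos(1/\sqrt{q})\in(0,\pi/2)$ and $h(\theta)=\dfrac{\sqrt{q}\sin\theta}{\sqrt{q}\cos\theta+1}$. Then for each $\eta\in\mathbb{S}^1$ and each $l\in\{1,2\}$, with $\eta_l=(-1)^{l-1}\eta$, the equation $$\rho_n'(\theta)=h(\theta-\theta_{\eta_l}),\qquad \theta\in\mathbb{R}/(2\pi\mathbb{Z}),$$ has exactly two solutions $\mathcal{T}_{1,l}\eta$ and $\mathcal{T}_{2,l}\eta$, which satisfy $\mathcal{T}_{1,l}\eta-\theta_{\eta_l}\in(\theta_q-\pi,\pi-\theta_q)$ and $\mathcal{T}_{2,l}\eta-\theta_{\eta_l}\in(\pi-\theta_q,\theta_q+\pi)$ (modulo $2\pi$).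
   Context: We identify $\mathbb{S}^1$ with $\mathbb{R}/(2\pi\mathbb{Z})$ via $\theta\mapsto(\cos\theta,\sin\theta)^T$; $\theta_\eta$ denotes the angular coordinate of $\eta\in\mathbb{S}^1$. The function $h$ has poles exactly where $\cos\theta=-1/\sqrt{q}$, i.e. at $\theta=\pm(\pi-\theta_q)$ mod $2\pi$. *)

theory Defs
  imports "HOL-Analysis.Analysis"
begin

definition theta_q :: "real \<Rightarrow> real" where
  "theta_q q = arccos (1 / sqrt q)"

definition hfun :: "real \<Rightarrow> real \<Rightarrow> real" where
  "hfun q \<theta> = sqrt q * sin \<theta> / (sqrt q * cos \<theta> + 1)"

definition is_sol :: "real \<Rightarrow> (real \<Rightarrow> real) \<Rightarrow> real \<Rightarrow> real \<Rightarrow> bool" where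
  "is_sol q \<rho> \<phi> \<theta> \<longleftrightarrow>
     sqrt q * cos (\<theta> - \<phi>) + 1 \<noteq> 0 \<and>
     deriv (\<lambda>s. ln (\<rho> s)) \<theta> = hfun q (\<theta> - \<phi>)"

definition cong_2pi :: "real \<Rightarrow> real \<Rightarrow> bool" where
  "cong_2pi x y \<longleftrightarrow> (\<exists>k::int. x = y + 2 * pi * of_int k)"

end

theory Submission
  imports Defs "HOL-Library.Periodic_Fun"
begin

(* With a = sqrt q, the function h = a sin / (a cos + 1) has its poles at +-(pi - theta_q), and
   between two consecutive poles its slope (a^2 + a cos)/(a cos + 1)^2 is at least a/(1 + a),
   whereas the slope of rho_n' stays below a/(1 + a). So h(. - phi) - rho_n' is strictly increasing
   on each of the two arcs between the poles, and it runs from -infinity to +infinity there because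
   rho_n' is continuous: it vanishes exactly once on each arc. *)

lemma has_real_derivative_sin_over_cos_plus_1:
  fixes a x :: real
  assumes "a * cos x + 1 \<noteq> 0"
  shows "((\<lambda>x. a * sin x / (a * cos x + 1)) has_real_derivative
           (a\<^sup>2 + a * cos x) / (a * cos x + 1)\<^sup>2) (at x)"
proof -
  have "((\<lambda>x. a * sin x / (a * cos x + 1)) has_real_derivative
      (a * cos x * (a * cos x + 1) - a * sin x * - (a * sin x)) / ((a * cos x + 1) * (a * cos x + 1))) (at x)"
    using assms by (auto intro!: derivative_eq_intros)
  moreover have "a * cos x * (a * cos x + 1) - a * sin x * - (a * sin x) = a\<^sup>2 + a * cos x"
    using sin_cos_squared_add[of x] by algebra
  ultimately show ?thesis
    by (simp add: power2_eq_square)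
qed

lemma sin_over_cos_plus_1_deriv_ge:
  fixes a c :: real
  assumes "1 \<le> a" "\<bar>c\<bar> \<le> 1" "a * c + 1 \<noteq> 0"
  shows "a / (1 + a) \<le> (a\<^sup>2 + a * c) / (a * c + 1)\<^sup>2"
proof -
  have "(a\<^sup>2 + a * c) * (1 + a) - a * (a * c + 1)\<^sup>2 = a * (a\<^sup>2 * (1 - c\<^sup>2) + (a - 1) * (1 - c))"
    by (simp add: algebra_simps power2_eq_square)
  also have "\<dots> \<ge> 0"
    using assms abs_square_le_1[of c] by (intro mult_nonneg_nonneg add_nonneg_nonneg) auto
  finally show ?thesis
    using assms by (simp add: field_simps)
qed

lemma filterlim_divide_at_top_of_sign:
  fixes n d :: "'a \<Rightarrow> real"
  assumes n: "(n \<longlongrightarrow> A) F" and d: "(d \<longlongrightarrow> 0) F"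
    and sign: "eventually (\<lambda>x. 0 < A * d x) F"
  shows "LIM x F. n x / d x :> at_top"
proof -
  consider "0 < A" | "A < 0" | "A = 0" by linarith
  then show ?thesis
  proof cases
    case 1
    with sign have "eventually (\<lambda>x. 0 < d x) F"
      by (auto elim!: eventually_mono simp: zero_less_mult_iff)
    with 1 show ?thesis by (rule LIM_at_top_divide[OF n _ d])
  next
    case 2
    with sign have "eventually (\<lambda>x. 0 < - d x) F"
      by (auto elim!: eventually_mono simp: zero_less_mult_iff)
    then have "LIM x F. (- n x) / (- d x) :> at_top"
      using 2 n d by (intro LIM_at_top_divide tendsto_intros) (auto dest: tendsto_minus)
    then show ?thesis by simp
  next
    case 3
    with sign have "F = bot" by (simp add: eventually_False)
    then show ?thesis by (simp add: filterlim_def)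
  qed
qed

lemma filterlim_divide_at_bot_of_sign:
  fixes n d :: "'a \<Rightarrow> real"
  assumes "(n \<longlongrightarrow> A) F" "(d \<longlongrightarrow> 0) F" "eventually (\<lambda>x. A * d x < 0) F"
  shows "LIM x F. n x / d x :> at_bot"
proof -
  have "LIM x F. - n x / d x :> at_top"
    using assms by (intro filterlim_divide_at_top_of_sign[where A = "- A"] tendsto_intros) auto
  then show ?thesis by (simp add: filterlim_uminus_at_bot)
qed

lemma ex1_zero_if_deriv_pos:
  fixes f f' :: "real \<Rightarrow> real"
  assumes "l < u"
    and deriv: "\<And>x. x \<in> {l<..<u} \<Longrightarrow> (f has_real_derivative f' x) (at x)"
    and pos: "\<And>x. x \<in> {l<..<u} \<Longrightarrow> 0 < f' x"
    and bot: "filterlim f at_bot (at_right l)" and top: "filterlim f at_top (at_left u)"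
  shows "\<exists>!x \<in> {l<..<u}. f x = 0"
proof -
  define m where "m = (l + u) / 2"
  have m: "l < m" "m < u" using \<open>l < u\<close> by (auto simp: m_def)
  have mono: "f s < f t" if "l < s" "s < t" "t < u" for s t
  proof (rule DERIV_pos_imp_increasing[OF \<open>s < t\<close>])
    fix x assume "s \<le> x" "x \<le> t"
    then have "x \<in> {l<..<u}" using that by auto
    then show "\<exists>y. DERIV f x :> y \<and> 0 < y" using deriv pos by blast
  qed
  have "eventually (\<lambda>x. f x < 0 \<and> x \<in> {l<..<m}) (at_right l)"
    using bot m by (intro eventually_conj eventually_at_right_real) (auto simp: filterlim_at_bot_dense)
  then obtain x1 where x1: "f x1 < 0" "l < x1" "x1 < m"
    using eventually_happens'[OF trivial_limit_at_right_real] by auto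
  have "eventually (\<lambda>x. 0 < f x \<and> x \<in> {m<..<u}) (at_left u)"
    using top m by (intro eventually_conj eventually_at_left_real) (auto simp: filterlim_at_top_dense)
  then obtain x2 where x2: "0 < f x2" "m < x2" "x2 < u"
    using eventually_happens'[OF trivial_limit_at_left_real] by auto
  have "continuous_on {x1..x2} f"
    using x1 x2 m by (intro continuous_at_imp_continuous_on ballI DERIV_isCont[OF deriv]) auto
  then obtain x where "x1 \<le> x" "x \<le> x2" and x: "f x = 0"
    using IVT'[of f x1 0 x2] x1 x2 m by force
  then have "x \<in> {l<..<u}" using x1 x2 m by auto
  moreover have "y = x" if "y \<in> {l<..<u}" "f y = 0" for y
    using mono[of x y] mono[of y x] that x \<open>x \<in> {l<..<u}\<close> by (cases "x < y"; cases "y < x") auto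
  ultimately show ?thesis
    using x by blast
qed

lemma ex1_crossing_between_poles:
  fixes a l u :: real and g g' :: "real \<Rightarrow> real"
  assumes a: "1 \<le> a" and "l < u"
    and poles: "a * cos l + 1 = 0" "a * cos u + 1 = 0"
    and sign_l: "\<And>x. x \<in> {l<..<u} \<Longrightarrow> sin l * (a * cos x + 1) < 0"
    and sign_u: "\<And>x. x \<in> {l<..<u} \<Longrightarrow> 0 < sin u * (a * cos x + 1)"
    and g: "\<And>x. x \<in> {l..u} \<Longrightarrow> (g has_real_derivative g' x) (at x)"
    and g': "\<And>x. x \<in> {l..u} \<Longrightarrow> g' x < a / (1 + a)"
  shows "\<exists>!x \<in> {l<..<u}. a * sin x / (a * cos x + 1) = g x"
  \<comment> \<open>The sign hypotheses make the quotient tend to -infinity at l and to +infinity at u.\<close>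
proof -
  define f where "f x = a * sin x / (a * cos x + 1) - g x" for x
  have f': "(f has_real_derivative (a\<^sup>2 + a * cos x) / (a * cos x + 1)\<^sup>2 - g' x) (at x)"
    and f'_pos: "0 < (a\<^sup>2 + a * cos x) / (a * cos x + 1)\<^sup>2 - g' x"
    if x: "x \<in> {l<..<u}" for x
  proof -
    have "a * cos x + 1 \<noteq> 0" using sign_u[OF x] by auto
    then show "(f has_real_derivative (a\<^sup>2 + a * cos x) / (a * cos x + 1)\<^sup>2 - g' x) (at x)"
      unfolding f_def[abs_def] using x
      by (intro DERIV_diff has_real_derivative_sin_over_cos_plus_1 g) auto
    show "0 < (a\<^sup>2 + a * cos x) / (a * cos x + 1)\<^sup>2 - g' x"
      using sin_over_cos_plus_1_deriv_ge[OF a abs_cos_le_one \<open>a * cos x + 1 \<noteq> 0\<close>] g'[of x] x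
      by auto
  qed
  have g_cont: "(g \<longlongrightarrow> g x) (at x within S)" if "x \<in> {l..u}" for x S
    using DERIV_isCont[OF g[OF that]] isCont_def tendsto_within_subset by blast
  have den_lim: "((\<lambda>x. a * cos x + 1) \<longlongrightarrow> 0) (at c within S)" if "a * cos c + 1 = 0" for c S
    by (rule tendsto_eq_rhs[OF _ that]) (intro tendsto_intros)
  have "LIM x at_right l. a * sin x / (a * cos x + 1) :> at_bot"
    using poles \<open>l < u\<close> a
    by (intro filterlim_divide_at_bot_of_sign[where A = "a * sin l"] tendsto_intros den_lim
          eventually_mono[OF eventually_at_right_real[of l u]])
       (auto simp: mult.assoc mult_pos_neg sign_l)
  then have bot: "filterlim f at_bot (at_right l)"
    unfolding f_def using g_cont[of l] \<open>l < u\<close>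
    by (subst filterlim_tendsto_add_at_bot_iff[symmetric, where f = "\<lambda>x. g x" and c = "g l"]) auto
  have "LIM x at_left u. a * sin x / (a * cos x + 1) :> at_top"
    using poles \<open>l < u\<close> a
    by (intro filterlim_divide_at_top_of_sign[where A = "a * sin u"] tendsto_intros den_lim
          eventually_mono[OF eventually_at_left_real[of l u]])
       (auto simp: mult.assoc sign_u)
  then have top: "filterlim f at_top (at_left u)"
    unfolding f_def using g_cont[of u] \<open>l < u\<close>
    by (subst filterlim_tendsto_add_at_top_iff[symmetric, where f = "\<lambda>x. g x" and c = "g u"]) auto
  have "\<exists>!x \<in> {l<..<u}. f x = 0"
    using \<open>l < u\<close> f' f'_pos bot top by (rule ex1_zero_if_deriv_pos)
  then show ?thesis by (simp add: f_def)
qed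

lemma deriv_periodic:
  fixes f :: "real \<Rightarrow> real"
  assumes "\<And>t. f (t + p) = f t"
  shows "deriv f (t + p) = deriv f t"
  \<comment> \<open>No differentiability is needed: both sides choose from the same set of derivatives.\<close>
proof -
  have "(\<lambda>s. f (s + p)) = f" using assms by auto
  then show ?thesis
    unfolding deriv_def by (simp add: DERIV_shift)
qed

lemma deriv_ln_has_real_derivative:
  fixes \<rho> \<rho>' \<rho>'' :: "real \<Rightarrow> real"
  assumes pos: "\<And>t. 0 < \<rho> t"
    and d1: "\<And>t. (\<rho> has_real_derivative \<rho>' t) (at t)"
    and d2: "\<And>t. (\<rho>' has_real_derivative \<rho>'' t) (at t)"
  shows "(deriv (\<lambda>s. ln (\<rho> s)) has_real_derivative deriv (deriv (\<lambda>s. ln (\<rho> s))) t) (at t)"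
proof -
  have "deriv (\<lambda>s. ln (\<rho> s)) = (\<lambda>s. \<rho>' s / \<rho> s)"
    using pos d1 by (intro ext DERIV_imp_deriv) (auto intro!: derivative_eq_intros)
  moreover have "((\<lambda>s. \<rho>' s / \<rho> s) has_real_derivative
      (\<rho>'' t * \<rho> t - \<rho>' t * \<rho>' t) / (\<rho> t * \<rho> t)) (at t)"
    using pos[of t] d1 d2 by (auto intro!: derivative_eq_intros simp: power2_eq_square)
  ultimately show ?thesis
    by (metis DERIV_imp_deriv)
qed

lemma is_sol_cong_2pi:
  assumes "\<And>t. \<rho> (t + 2 * pi) = \<rho> t" and "cong_2pi \<theta> \<theta>'"
  shows "is_sol q \<rho> \<phi> \<theta> \<longleftrightarrow> is_sol q \<rho> \<phi> \<theta>'"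
proof -
  interpret G: periodic_fun_simple "deriv (\<lambda>s. ln (\<rho> s))" "2 * pi"
    by standard (rule deriv_periodic, simp add: assms(1))
  obtain k where k: "\<theta> = \<theta>' + of_int k * (2 * pi)"
    using assms(2) by (auto simp: cong_2pi_def mult.commute)
  have "\<theta> - \<phi> = (\<theta>' - \<phi>) + of_int k * (2 * pi)" using k by simp
  then show ?thesis
    unfolding is_sol_def hfun_def k
    by (simp only: G.plus_of_int cos.plus_of_int[where 'a = real, simplified]
        sin.plus_of_int[where 'a = real, simplified])
qed

lemma ex_cong_2pi_in_period:
  fixes x b :: real
  shows "\<exists>y. cong_2pi x y \<and> b \<le> y \<and> y < b + 2 * pi"
proof -
  define k where "k = \<lfloor>(x - b) / (2 * pi)\<rfloor>"
  have "of_int k \<le> (x - b) / (2 * pi)" "(x - b) / (2 * pi) < of_int k + 1"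
    unfolding k_def by linarith+
  then have "b \<le> x - 2 * pi * of_int k" "x - 2 * pi * of_int k < b + 2 * pi"
    by (simp_all add: field_simps)
  moreover have "cong_2pi x (x - 2 * pi * of_int k)"
    unfolding cong_2pi_def by (intro exI[of _ k]) simp
  ultimately show ?thesis by blast
qed

lemma theta_q_bounds:
  assumes "1 < q"
  shows "0 < theta_q q" "theta_q q < pi" "sqrt q * cos (theta_q q) = 1"
proof -
  have "0 < 1 / sqrt q" "1 / sqrt q < 1" using assms by auto
  then have "-1 < 1 / sqrt q" "1 / sqrt q < 1" by linarith+
  then show "0 < theta_q q" "theta_q q < pi" "sqrt q * cos (theta_q q) = 1"
    unfolding theta_q_def using arccos_lt_bounded[of "1 / sqrt q"] cos_arccos[of "1 / sqrt q"] assms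
    by auto
qed

lemma sqrt_cos_plus_1_pos:
  assumes "1 < q" "\<bar>x\<bar> < pi - theta_q q"
  shows "0 < sqrt q * cos x + 1"
proof -
  have "cos (pi - theta_q q) < cos \<bar>x\<bar>"
    using assms theta_q_bounds[OF assms(1)] by (intro cos_monotone_0_pi) auto
  then have "sqrt q * (- cos (theta_q q)) < sqrt q * cos x"
    using assms(1) by (intro mult_strict_left_mono) auto
  then show ?thesis
    using theta_q_bounds(3)[OF assms(1)] by simp
qed

lemma sqrt_cos_plus_1_neg:
  assumes "1 < q" "\<bar>x - pi\<bar> < theta_q q"
  shows "sqrt q * cos x + 1 < 0"
proof -
  have "cos (theta_q q) < cos \<bar>x - pi\<bar>"
    using assms theta_q_bounds[OF assms(1)] by (intro cos_monotone_0_pi) auto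
  then have "sqrt q * cos (theta_q q) < sqrt q * (- cos x)"
    using assms(1) by (intro mult_strict_left_mono) (auto simp: cos_diff)
  then show ?thesis
    using theta_q_bounds(3)[OF assms(1)] by simp
qed

lemma ex1_hfun_eq_near_0:
  fixes g g' :: "real \<Rightarrow> real"
  assumes q: "1 < q"
    and g: "\<And>x. (g has_real_derivative g' x) (at x)" "\<And>x. g' x < sqrt q / (1 + sqrt q)"
  shows "\<exists>!x \<in> {theta_q q - pi<..<pi - theta_q q}. hfun q x = g x"
  unfolding hfun_def
proof (rule ex1_crossing_between_poles)
  note \<theta> = theta_q_bounds[OF q]
  show "sqrt q * cos (theta_q q - pi) + 1 = 0" "sqrt q * cos (pi - theta_q q) + 1 = 0"
    using \<theta>(3) by (simp_all add: cos_diff)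
  fix x assume "x \<in> {theta_q q - pi<..<pi - theta_q q}"
  then have "0 < sqrt q * cos x + 1" using q by (intro sqrt_cos_plus_1_pos) auto
  moreover have "0 < sin (theta_q q)" using \<theta> by (intro sin_gt_zero) auto
  ultimately show "sin (theta_q q - pi) * (sqrt q * cos x + 1) < 0"
    and "0 < sin (pi - theta_q q) * (sqrt q * cos x + 1)"
    by (simp_all add: sin_diff mult_neg_pos)
qed (use q g theta_q_bounds[OF q] in auto)

lemma ex1_hfun_eq_near_pi:
  fixes g g' :: "real \<Rightarrow> real"
  assumes q: "1 < q"
    and g: "\<And>x. (g has_real_derivative g' x) (at x)" "\<And>x. g' x < sqrt q / (1 + sqrt q)"
  shows "\<exists>!x \<in> {pi - theta_q q<..<theta_q q + pi}. hfun q x = g x"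
  unfolding hfun_def
proof (rule ex1_crossing_between_poles)
  note \<theta> = theta_q_bounds[OF q]
  show "sqrt q * cos (pi - theta_q q) + 1 = 0" "sqrt q * cos (theta_q q + pi) + 1 = 0"
    using \<theta>(3) by (simp_all add: cos_diff cos_add)
  fix x assume "x \<in> {pi - theta_q q<..<theta_q q + pi}"
  then have "sqrt q * cos x + 1 < 0" using q by (intro sqrt_cos_plus_1_neg) auto
  moreover have "0 < sin (theta_q q)" using \<theta> by (intro sin_gt_zero) auto
  ultimately show "sin (pi - theta_q q) * (sqrt q * cos x + 1) < 0"
    and "0 < sin (theta_q q + pi) * (sqrt q * cos x + 1)"
    by (simp_all add: sin_diff sin_add mult_pos_neg mult_neg_neg)
qed (use q g theta_q_bounds[OF q] in auto)

lemma is_sol_representative_in_arcs: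
  assumes q: "1 < q" and per: "\<And>t. \<rho> (t + 2 * pi) = \<rho> t" and sol: "is_sol q \<rho> \<phi> \<theta>"
  obtains y where "cong_2pi \<theta> y" "is_sol q \<rho> \<phi> y"
    "y - \<phi> \<in> {theta_q q - pi<..<pi - theta_q q} \<union> {pi - theta_q q<..<theta_q q + pi}"
proof -
  obtain y where y: "cong_2pi \<theta> y" "\<phi> + (theta_q q - pi) \<le> y" "y < \<phi> + (theta_q q - pi) + 2 * pi"
    using ex_cong_2pi_in_period by blast
  with per sol have "is_sol q \<rho> \<phi> y"
    using is_sol_cong_2pi by blast
  moreover have "sqrt q * cos (theta_q q - pi) + 1 = 0" "sqrt q * cos (pi - theta_q q) + 1 = 0"
    using theta_q_bounds(3)[OF q] by (simp_all add: cos_diff)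
  ultimately have "y - \<phi> \<noteq> theta_q q - pi" "y - \<phi> \<noteq> pi - theta_q q"
    by (auto simp: is_sol_def)
  with y \<open>is_sol q \<rho> \<phi> y\<close> show ?thesis
    by (intro that) auto
qed

theorem lemma4:
  fixes q :: real and \<rho> \<rho>' \<rho>'' :: "real \<Rightarrow> real"
    and \<eta> :: complex and l :: nat and \<phi> :: real
  assumes q: "q > 1"
    and pos: "\<forall>t. \<rho> t > 0"
    and per: "\<forall>t. \<rho> (t + 2 * pi) = \<rho> t"
    and d1: "\<forall>t. (\<rho> has_real_derivative \<rho>' t) (at t)"
    and d2: "\<forall>t. (\<rho>' has_real_derivative \<rho>'' t) (at t)"
    and c2: "continuous_on UNIV \<rho>''"
    and conv: "\<forall>t. deriv (deriv (\<lambda>s. ln (\<rho> s))) t < sqrt q / (1 + sqrt q)"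
    and eta: "cmod \<eta> = 1"
    and l: "l \<in> {1, 2}"
    and phi: "cis \<phi> = (-1) ^ (l - 1) * \<eta>"
  shows "\<exists>T1 T2.
           is_sol q \<rho> \<phi> T1 \<and> is_sol q \<rho> \<phi> T2 \<and>
           T1 - \<phi> \<in> {theta_q q - pi <..< pi - theta_q q} \<and>
           T2 - \<phi> \<in> {pi - theta_q q <..< theta_q q + pi} \<and>
           (\<forall>\<theta>. is_sol q \<rho> \<phi> \<theta> \<longrightarrow> cong_2pi \<theta> T1 \<or> cong_2pi \<theta> T2)"
proof -
  define G where "G = deriv (\<lambda>s. ln (\<rho> s))"
  have g: "((\<lambda>x. G (x + \<phi>)) has_real_derivative deriv G (x + \<phi>)) (at x)" for x
    using deriv_ln_has_real_derivative[OF pos[rule_format] d1[rule_format] d2[rule_format], of "x + \<phi>"]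
    unfolding G_def DERIV_shift .
  have g': "deriv G (x + \<phi>) < sqrt q / (1 + sqrt q)" for x
    using conv by (simp add: G_def)
  obtain \<psi>1 where \<psi>1: "\<psi>1 \<in> {theta_q q - pi<..<pi - theta_q q}" "hfun q \<psi>1 = G (\<psi>1 + \<phi>)"
    and \<psi>1_unique: "\<And>x. x \<in> {theta_q q - pi<..<pi - theta_q q} \<Longrightarrow> hfun q x = G (x + \<phi>) \<Longrightarrow> x = \<psi>1"
    using ex1_hfun_eq_near_0[OF q g g'] by blast
  obtain \<psi>2 where \<psi>2: "\<psi>2 \<in> {pi - theta_q q<..<theta_q q + pi}" "hfun q \<psi>2 = G (\<psi>2 + \<phi>)"
    and \<psi>2_unique: "\<And>x. x \<in> {pi - theta_q q<..<theta_q q + pi} \<Longrightarrow> hfun q x = G (x + \<phi>) \<Longrightarrow> x = \<psi>2"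
    using ex1_hfun_eq_near_pi[OF q g g'] by blast
  have sol_iff: "is_sol q \<rho> \<phi> \<theta> \<longleftrightarrow> sqrt q * cos (\<theta> - \<phi>) + 1 \<noteq> 0 \<and> hfun q (\<theta> - \<phi>) = G \<theta>" for \<theta>
    unfolding is_sol_def G_def by auto
  show ?thesis
  proof (intro exI conjI allI impI)
    show "is_sol q \<rho> \<phi> (\<psi>1 + \<phi>)"
      using \<psi>1 sqrt_cos_plus_1_pos[OF q, of \<psi>1] by (auto simp: sol_iff abs_less_iff)
    show "is_sol q \<rho> \<phi> (\<psi>2 + \<phi>)"
      using \<psi>2 sqrt_cos_plus_1_neg[OF q, of \<psi>2] by (auto simp: sol_iff abs_less_iff)
    show "\<psi>1 + \<phi> - \<phi> \<in> {theta_q q - pi<..<pi - theta_q q}" "\<psi>2 + \<phi> - \<phi> \<in> {pi - theta_q q<..<theta_q q + pi}"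
      using \<psi>1 \<psi>2 by auto
    fix \<theta> assume "is_sol q \<rho> \<phi> \<theta>"
    then obtain y where "cong_2pi \<theta> y" "is_sol q \<rho> \<phi> y"
      "y - \<phi> \<in> {theta_q q - pi<..<pi - theta_q q} \<union> {pi - theta_q q<..<theta_q q + pi}"
      using is_sol_representative_in_arcs[of q \<rho> \<phi> \<theta>] q per by blast
    then have "y - \<phi> = \<psi>1 \<or> y - \<phi> = \<psi>2"
      using \<psi>1_unique[of "y - \<phi>"] \<psi>2_unique[of "y - \<phi>"] by (auto simp: sol_iff)
    with \<open>cong_2pi \<theta> y\<close> show "cong_2pi \<theta> (\<psi>1 + \<phi>) \<or> cong_2pi \<theta> (\<psi>2 + \<phi>)"
      by auto
  qed
qed

end
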